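(* Let $G=(V,E)$ be a finite simple graph and let $L$ and $|H|$ be its connection matrix and its sign-less Hodge Laplacian (defined in the context). Then $L$ is invertible, its inverse $L^{-1}$ has integer entries, and $$|H| = L - L^{-1}.$$
   Context: Let $G=(V,E)$ be a finite simple graph. Its associated $1$-dimensional simplicial complex is the set of simplices $X=\{\{v\}: v\in V\}\cup E$, where each edge is regarded as a $2$-element subset of $V$; put $N=|V|+|E|$. Fix an ordering of $X$, so that real-valued functions on $X$ are vectors in $\mathbb{R}^N$ and operators on them are $N\times N$ matrices indexed by $X$. The connection matrix (connection Laplacian) $L$ is the $N\times N$ matrix with $L(x,y)=1$ if $x\cap y\neq\emptyset$ and $L(x,y)=0$ if $x\cap y=\emptyset$. The sign-less exterior derivative $|d|$ is the $N\times N$ matrix with $|d|(x,y)=1$ if $y\subset x$ and $|x|=|y|+1$, and $|d|(x,y)=0$ otherwise. The sign-less Hodge Laplacian is $|H|=(|d|+|d|^T)^2$. *)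

theory Defs
  imports Complex_Main
begin

definition simple_graph :: "'a set \<Rightarrow> 'a set set \<Rightarrow> bool" where
  "simple_graph V E \<longleftrightarrow> finite V \<and>
     (\<forall>e\<in>E. \<exists>u v. u \<in> V \<and> v \<in> V \<and> u \<noteq> v \<and> e = {u, v})"

definition simplices :: "'a set \<Rightarrow> 'a set set \<Rightarrow> 'a set set" where
  "simplices V E = {{v} | v. v \<in> V} \<union> E"

definition mat_mult :: "'b set \<Rightarrow> ('b \<Rightarrow> 'b \<Rightarrow> real) \<Rightarrow> ('b \<Rightarrow> 'b \<Rightarrow> real) \<Rightarrow> ('b \<Rightarrow> 'b \<Rightarrow> real)" where
  "mat_mult X A B = (\<lambda>x y. \<Sum>z\<in>X. A x z * B z y)"

definition mat_id :: "'b \<Rightarrow> 'b \<Rightarrow> real" where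
  "mat_id = (\<lambda>x y. if x = y then 1 else 0)"

definition mat_transpose :: "('b \<Rightarrow> 'b \<Rightarrow> real) \<Rightarrow> ('b \<Rightarrow> 'b \<Rightarrow> real)" where
  "mat_transpose A = (\<lambda>x y. A y x)"

definition is_inverse_on :: "'b set \<Rightarrow> ('b \<Rightarrow> 'b \<Rightarrow> real) \<Rightarrow> ('b \<Rightarrow> 'b \<Rightarrow> real) \<Rightarrow> bool" where
  "is_inverse_on X A M \<longleftrightarrow>
     (\<forall>x\<in>X. \<forall>y\<in>X. mat_mult X A M x y = mat_id x y \<and> mat_mult X M A x y = mat_id x y)"

definition connection_matrix :: "'a set \<Rightarrow> 'a set \<Rightarrow> real" where
  "connection_matrix = (\<lambda>x y. if x \<inter> y \<noteq> {} then 1 else 0)"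

definition signless_d :: "'a set \<Rightarrow> 'a set \<Rightarrow> real" where
  "signless_d = (\<lambda>x y. if y \<subset> x \<and> card x = card y + 1 then 1 else 0)"

definition signless_hodge :: "'a set set \<Rightarrow> 'a set \<Rightarrow> 'a set \<Rightarrow> real" where
  "signless_hodge X =
     (let D = (\<lambda>x y. signless_d x y + mat_transpose signless_d x y) in mat_mult X D D)"

end

theory Submission
  imports Defs
begin

text \<open>Let \<open>B\<close> be the vertex-edge incidence matrix. Writing \<open>|H| = D\<^sup>2\<close> with
  \<open>D = |d| + |d|\<^sup>T\<close>, whose only nonzero blocks are \<open>B\<close> and \<open>B\<^sup>T\<close>, the Hodge
  Laplacian is block diagonal with blocks \<open>B B\<^sup>T\<close> and \<open>B\<^sup>T B\<close>. Since two distinct edges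
  share at most one vertex, the edge block of \<open>L\<close> is \<open>B\<^sup>T B - 1\<close>, so
  \<open>L = [[1, B], [B\<^sup>T, B\<^sup>T B - 1]]\<close> and \<open>L - |H| = [[1 - B B\<^sup>T, B], [B\<^sup>T, -1]]\<close>;
  multiplying the blocks out gives the identity. Both matrices are symmetric, so this one-sided
  inverse is two-sided.\<close>

lemma sum_mult_of_bool_eq_delta:
  fixes f :: "'a \<Rightarrow> 'b::comm_semiring_1"
  assumes "finite A"
  shows "(\<Sum>x\<in>A. f x * of_bool (x = a)) = (if a \<in> A then f a else 0)"
proof -
  have "(\<Sum>x\<in>A. f x * of_bool (x = a)) = (\<Sum>x\<in>A. if x = a then f x else 0)"
    by (rule sum.cong) auto
  then show ?thesis
    using assms by (simp add: sum.delta)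
qed

lemma sum_of_bool_eq_mult_delta:
  fixes f :: "'a \<Rightarrow> 'b::comm_semiring_1"
  assumes "finite A"
  shows "(\<Sum>x\<in>A. of_bool (x = a) * f x) = (if a \<in> A then f a else 0)"
  using sum_mult_of_bool_eq_delta[OF assms, of f a] by (simp only: mult.commute)

lemma mat_mult_sym_swap:
  assumes "\<And>x y. A x y = A y x" "\<And>x y. B x y = B y x"
  shows "mat_mult X A B x y = mat_mult X B A y x"
  unfolding mat_mult_def by (simp add: assms mult.commute)

lemma simple_graph_edgeE:
  assumes "simple_graph V E" "e \<in> E"
  obtains u v where "u \<in> V" "v \<in> V" "u \<noteq> v" "e = {u, v}"
  using assms unfolding simple_graph_def by blast

lemma simple_graph_card_edge: "simple_graph V E \<Longrightarrow> e \<in> E \<Longrightarrow> card e = 2"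
  by (erule simple_graph_edgeE) auto

lemma simple_graph_edge_subset: "simple_graph V E \<Longrightarrow> e \<in> E \<Longrightarrow> e \<subseteq> V"
  by (erule simple_graph_edgeE) auto

lemma simple_graph_finite_vertices: "simple_graph V E \<Longrightarrow> finite V"
  by (simp add: simple_graph_def)

lemma simple_graph_finite_edges: "simple_graph V E \<Longrightarrow> finite E"
  by (meson Pow_iff finite_Pow_iff rev_finite_subset simple_graph_edge_subset
      simple_graph_finite_vertices subsetI)

lemma sum_simplices:
  assumes "simple_graph V E"
  shows "(\<Sum>z\<in>simplices V E. g z) = (\<Sum>c\<in>V. g {c}) + (\<Sum>e\<in>E. g e)"
proof -
  have "(\<lambda>v. {v}) ` V \<inter> E = {}"
    using simple_graph_card_edge[OF assms] by fastforce
  moreover have "simplices V E = (\<lambda>v. {v}) ` V \<union> E"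
    unfolding simplices_def by blast
  ultimately show ?thesis
    using simple_graph_finite_vertices[OF assms] simple_graph_finite_edges[OF assms]
    by (simp add: sum.union_disjoint sum.reindex)
qed

lemma simplicesE:
  assumes "x \<in> simplices V E"
  obtains (vertex) a where "a \<in> V" "x = {a}" | (edge) "x \<in> E"
  using assms unfolding simplices_def by blast

lemma mat_mult_simplices:
  assumes "simple_graph V E"
  shows "mat_mult (simplices V E) A B x y
           = (\<Sum>c\<in>V. A x {c} * B {c} y) + (\<Sum>e\<in>E. A x e * B e y)"
  unfolding mat_mult_def sum_simplices[OF assms] ..

lemma connection_matrix_edge_edge:
  assumes "simple_graph V E" "e \<in> E" "f \<in> E"
  shows "connection_matrix e f = real (card (e \<inter> f)) - of_bool (e = f)"
proof -
  obtain u v where "e = {u, v}" "u \<noteq> v" using simple_graph_edgeE[OF assms(1,2)] by metis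
  moreover obtain p q where "f = {p, q}" "p \<noteq> q" using simple_graph_edgeE[OF assms(1,3)] by metis
  ultimately show ?thesis
    by (cases "u = p"; cases "u = q"; cases "v = p"; cases "v = q")
      (auto simp: connection_matrix_def insert_commute card_insert_if)
qed

lemma sum_incidence_eq_card_inter:
  assumes "simple_graph V E" "e \<in> E"
  shows "(\<Sum>c\<in>V. of_bool (c \<in> e) * of_bool (c \<in> f)) = real (card (e \<inter> f))"
proof -
  have "(\<Sum>c\<in>V. of_bool (c \<in> e) * of_bool (c \<in> f)) = real (card (V \<inter> {c. c \<in> e \<and> c \<in> f}))"
    using simple_graph_finite_vertices[OF assms(1)] by (simp flip: of_bool_conj)
  also have "V \<inter> {c. c \<in> e \<and> c \<in> f} = e \<inter> f"
    using simple_graph_edge_subset[OF assms] by blast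
  finally show ?thesis .
qed

definition signless_dirac :: "'a set \<Rightarrow> 'a set \<Rightarrow> real" where
  "signless_dirac x y = signless_d x y + signless_d y x"

lemma signless_hodge_eq_sum_dirac:
  "signless_hodge X x y = (\<Sum>z\<in>X. signless_dirac x z * signless_dirac z y)"
  by (simp add: signless_hodge_def signless_dirac_def mat_mult_def mat_transpose_def)

lemma signless_hodge_sym: "signless_hodge X x y = signless_hodge X y x"
  unfolding signless_hodge_eq_sum_dirac signless_dirac_def by (simp add: mult.commute add.commute)

lemma signless_dirac_vertex_vertex: "signless_dirac {a} {b} = 0"
  by (auto simp: signless_dirac_def signless_d_def)

lemma signless_dirac_vertex_edge:
  "simple_graph V E \<Longrightarrow> e \<in> E \<Longrightarrow> signless_dirac {a} e = of_bool (a \<in> e)"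
  by (erule simple_graph_edgeE) (auto simp: signless_dirac_def signless_d_def)

lemma signless_dirac_edge_vertex:
  "simple_graph V E \<Longrightarrow> e \<in> E \<Longrightarrow> signless_dirac e {a} = of_bool (a \<in> e)"
  by (erule simple_graph_edgeE) (auto simp: signless_dirac_def signless_d_def)

lemma signless_dirac_edge_edge:
  "simple_graph V E \<Longrightarrow> e \<in> E \<Longrightarrow> f \<in> E \<Longrightarrow> signless_dirac e f = 0"
  by (auto simp: signless_dirac_def signless_d_def simple_graph_card_edge)

lemma signless_hodge_vertex_vertex:
  assumes "simple_graph V E"
  shows "signless_hodge (simplices V E) {a} {b} = (\<Sum>e\<in>E. of_bool (a \<in> e) * of_bool (b \<in> e))"
  unfolding signless_hodge_eq_sum_dirac sum_simplices[OF assms]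
  by (simp add: signless_dirac_vertex_vertex signless_dirac_vertex_edge[OF assms]
      signless_dirac_edge_vertex[OF assms] cong: sum.cong)

lemma signless_hodge_vertex_edge:
  assumes "simple_graph V E" "f \<in> E"
  shows "signless_hodge (simplices V E) {a} f = 0"
  unfolding signless_hodge_eq_sum_dirac sum_simplices[OF assms(1)]
  by (simp add: signless_dirac_vertex_vertex signless_dirac_edge_edge[OF assms(1) _ assms(2)])

lemma signless_hodge_edge_edge:
  assumes "simple_graph V E" "e \<in> E" "f \<in> E"
  shows "signless_hodge (simplices V E) e f = real (card (e \<inter> f))"
  unfolding signless_hodge_eq_sum_dirac sum_simplices[OF assms(1)]
    sum_incidence_eq_card_inter[OF assms(1,2), symmetric]
  by (simp add: signless_dirac_edge_edge[OF assms(1,2)] signless_dirac_vertex_edge[OF assms(1,3)]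
      signless_dirac_edge_vertex[OF assms(1,2)] cong: sum.cong)

lemma connection_matrix_sym: "connection_matrix x y = connection_matrix y x"
  by (auto simp: connection_matrix_def)

lemma connection_matrix_vertex_vertex: "connection_matrix {a} {b} = of_bool (a = b)"
  by (auto simp: connection_matrix_def)

lemma connection_matrix_vertex: "connection_matrix {a} y = of_bool (a \<in> y)"
  by (auto simp: connection_matrix_def)

definition connection_inverse :: "'a set set \<Rightarrow> 'a set \<Rightarrow> 'a set \<Rightarrow> real" where
  "connection_inverse X x y = connection_matrix x y - signless_hodge X x y"

lemma connection_inverse_sym: "connection_inverse X x y = connection_inverse X y x"
  unfolding connection_inverse_def by (metis connection_matrix_sym signless_hodge_sym)

lemma connection_inverse_vertex_vertex:
  assumes "simple_graph V E"
  shows "connection_inverse (simplices V E) {a} {b} =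
           of_bool (a = b) - (\<Sum>e\<in>E. of_bool (a \<in> e) * of_bool (b \<in> e))"
  by (simp add: connection_inverse_def connection_matrix_vertex_vertex
      signless_hodge_vertex_vertex[OF assms])

lemma connection_inverse_vertex_edge:
  assumes "simple_graph V E" "f \<in> E"
  shows "connection_inverse (simplices V E) {a} f = of_bool (a \<in> f)"
  by (simp add: connection_inverse_def connection_matrix_vertex signless_hodge_vertex_edge[OF assms])

lemma connection_inverse_edge_vertex:
  assumes "simple_graph V E" "e \<in> E"
  shows "connection_inverse (simplices V E) e {b} = of_bool (b \<in> e)"
  using connection_inverse_vertex_edge[OF assms] connection_inverse_sym by metis

lemma connection_inverse_edge_edge:
  assumes "simple_graph V E" "e \<in> E" "f \<in> E"
  shows "connection_inverse (simplices V E) e f = - of_bool (e = f)"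
  by (simp add: connection_inverse_def connection_matrix_edge_edge[OF assms]
      signless_hodge_edge_edge[OF assms])

lemma connection_mult_inverse_vertex_row:
  assumes "simple_graph V E" "a \<in> V" "y \<in> simplices V E"
  shows "mat_mult (simplices V E) connection_matrix (connection_inverse (simplices V E)) {a} y
           = mat_id {a} y"
proof -
  have fin: "finite V" "finite E"
    using assms(1) simple_graph_finite_vertices simple_graph_finite_edges by blast+
  have "mat_mult (simplices V E) connection_matrix (connection_inverse (simplices V E)) {a} y
          = connection_inverse (simplices V E) {a} y
            + (\<Sum>e\<in>E. of_bool (a \<in> e) * connection_inverse (simplices V E) e y)"
    using assms(2) fin by (simp add: mat_mult_simplices[OF assms(1)] connection_matrix_vertex)
  also from assms(3) have "\<dots> = mat_id {a} y"
  proof (cases rule: simplicesE)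
    case (vertex b)
    then show ?thesis
      by (simp add: connection_inverse_vertex_vertex[OF assms(1)]
          connection_inverse_edge_vertex[OF assms(1)] mat_id_def cong: sum.cong)
  next
    case edge
    have "{a} \<noteq> y"
      using simple_graph_card_edge[OF assms(1) edge] by auto
    then show ?thesis
      using edge fin by (simp add: connection_inverse_vertex_edge[OF assms(1)] sum_negf
          connection_inverse_edge_edge[OF assms(1)] mat_id_def sum_mult_of_bool_eq_delta
          del: sum_mult_of_bool_eq cong: sum.cong)
  qed
  finally show ?thesis .
qed

lemma connection_mult_inverse_edge_row:
  assumes "simple_graph V E" "e \<in> E" "y \<in> simplices V E"
  shows "mat_mult (simplices V E) connection_matrix (connection_inverse (simplices V E)) e y
           = mat_id e y"
proof -
  let ?M = "connection_inverse (simplices V E)"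
  have fin: "finite V" "finite E"
    using assms(1) simple_graph_finite_vertices simple_graph_finite_edges by blast+
  have "mat_mult (simplices V E) connection_matrix ?M e y
          = (\<Sum>c\<in>V. of_bool (c \<in> e) * ?M {c} y) + (\<Sum>f\<in>E. connection_matrix e f * ?M f y)"
    by (simp add: mat_mult_simplices[OF assms(1)] connection_matrix_vertex connection_matrix_sym[of e])
  also from assms(3) have "\<dots> = mat_id e y"
  proof (cases rule: simplicesE)
    case (vertex b)
    have "(\<Sum>c\<in>V. of_bool (c \<in> e) * ?M {c} y)
        = (\<Sum>c\<in>V. of_bool (c \<in> e) * of_bool (c = b))
          - (\<Sum>c\<in>V. \<Sum>f\<in>E. of_bool (c \<in> e) * of_bool (c \<in> f) * of_bool (b \<in> f))"
      by (simp add: vertex connection_inverse_vertex_vertex[OF assms(1)] right_diff_distrib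
          sum_subtractf sum_distrib_left mult.assoc del: sum_mult_of_bool_eq sum_of_bool_mult_eq)
    also have "\<dots> = of_bool (b \<in> e) - (\<Sum>f\<in>E. real (card (e \<inter> f)) * of_bool (b \<in> f))"
      using fin vertex
      by (simp add: sum_mult_of_bool_eq_delta sum.swap[of _ V] sum_distrib_right
          sum_incidence_eq_card_inter[OF assms(1,2), symmetric]
          del: sum_mult_of_bool_eq sum_of_bool_mult_eq)
    also have "(\<Sum>f\<in>E. real (card (e \<inter> f)) * of_bool (b \<in> f))
        = (\<Sum>f\<in>E. connection_matrix e f * ?M f y) + of_bool (b \<in> e)"
      using fin assms(2) vertex
      by (simp add: connection_matrix_edge_edge[OF assms(1,2)]
          connection_inverse_edge_vertex[OF assms(1)]
          left_diff_distrib sum_subtractf eq_commute[of e] sum_of_bool_eq_mult_delta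
          del: sum_mult_of_bool_eq sum_of_bool_mult_eq cong: sum.cong)
    finally show ?thesis
      using simple_graph_card_edge[OF assms(1,2)] vertex by (auto simp: mat_id_def)
  next
    case edge
    then show ?thesis
      using fin assms(2)
      by (simp add: connection_inverse_vertex_edge[OF assms(1)]
          connection_inverse_edge_edge[OF assms(1)]
          sum_incidence_eq_card_inter[OF assms(1,2)] connection_matrix_edge_edge[OF assms(1,2)]
          sum_negf sum_mult_of_bool_eq_delta mat_id_def
          del: sum_mult_of_bool_eq sum_of_bool_mult_eq cong: sum.cong)
  qed
  finally show ?thesis .
qed

lemma connection_mult_inverse:
  assumes "simple_graph V E" "x \<in> simplices V E" "y \<in> simplices V E"
  shows "mat_mult (simplices V E) connection_matrix (connection_inverse (simplices V E)) x y
           = mat_id x y"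
  using assms(2)
proof (cases rule: simplicesE)
  case (vertex a)
  then show ?thesis
    using connection_mult_inverse_vertex_row[OF assms(1) _ assms(3)] by simp
next
  case edge
  then show ?thesis
    using connection_mult_inverse_edge_row[OF assms(1) _ assms(3)] by simp
qed

lemma is_inverse_on_connection_inverse:
  assumes "simple_graph V E"
  shows "is_inverse_on (simplices V E) connection_matrix (connection_inverse (simplices V E))"
  unfolding is_inverse_on_def
proof (intro ballI conjI)
  fix x y assume xy: "x \<in> simplices V E" "y \<in> simplices V E"
  then show "mat_mult (simplices V E) connection_matrix (connection_inverse (simplices V E)) x y
               = mat_id x y"
    by (rule connection_mult_inverse[OF assms])
  have "mat_mult (simplices V E) (connection_inverse (simplices V E)) connection_matrix x y
          = mat_mult (simplices V E) connection_matrix (connection_inverse (simplices V E)) y x"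
    by (rule mat_mult_sym_swap[OF connection_inverse_sym connection_matrix_sym])
  also have "\<dots> = mat_id x y"
    using connection_mult_inverse[OF assms xy(2,1)] by (simp add: mat_id_def eq_commute)
  finally show "mat_mult (simplices V E) (connection_inverse (simplices V E)) connection_matrix x y
                  = mat_id x y" .
qed

lemma connection_inverse_Ints: "connection_inverse X x y \<in> \<int>"
  unfolding connection_inverse_def connection_matrix_def signless_hodge_eq_sum_dirac
    signless_dirac_def signless_d_def
  by (intro Ints_diff Ints_sum Ints_mult Ints_add) auto

theorem mainTheorem1:
  fixes V :: "'a set" and E :: "'a set set"
  assumes "simple_graph V E"
  defines "X \<equiv> simplices V E"
  shows "\<exists>M. is_inverse_on X connection_matrix M
            \<and> (\<forall>x\<in>X. \<forall>y\<in>X. M x y \<in> \<int>)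
            \<and> (\<forall>x\<in>X. \<forall>y\<in>X. signless_hodge X x y = connection_matrix x y - M x y)"
proof (intro exI conjI)
  show "is_inverse_on X connection_matrix (connection_inverse X)"
    unfolding X_def using is_inverse_on_connection_inverse[OF assms(1)] .
  show "\<forall>x\<in>X. \<forall>y\<in>X. connection_inverse X x y \<in> \<int>"
    using connection_inverse_Ints by blast
  show "\<forall>x\<in>X. \<forall>y\<in>X. signless_hodge X x y = connection_matrix x y - connection_inverse X x y"
    by (simp add: connection_inverse_def)
qed

end
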